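(* The length complexity of $\mathsf{C\text{-}RASP}_+$ (with $\mathsf{C\text{-}RASP}_+$ programs as representations and program size as descriptional complexity) is exponential in the size of the program: there is a polynomial $q$ such that any two $\mathsf{C\text{-}RASP}_+$ programs of size at most $c$ defining different languages are distinguished by a string of length at most $2^{q(c)}$, and exponential length is needed in the worst case.
   Context: $\mathsf{C\text{-}RASP}_+$ formulas over a finite alphabet $\Sigma$: $\phi ::= \sigma \mid \neg\phi \mid \phi_1\wedge\phi_2 \mid \sum_{t\in\mathcal T}\alpha_t t\sim k$, terms $t ::= \#[\phi] \mid c$, with $\sigma\in\Sigma$, $\alpha_t,k,c\in\mathbb{N}$, ${\sim}\in\{\ge,>,=,<,\le\}$. At position $i$ of $w$: $w,i\models\sigma$ iff $w_i=\sigma$; Boolean connectives as usual; $\#[\phi]$ evaluates to $|\{j\in[1,i]: w,j\models\phi\}|$, $c$ to $c$, comparisons are integer comparisons. $w\models\phi$ iff $w,|w|\models\phi$; $L(\phi)=\{w:w\models\phi\}$. Programs are straight-line (DAG) representations with references to earlier lines; size is the number of symbols with constants in binary and references counted as 1. The length complexity is $f(c)=\max\{\min\{|w| : w\in L(E)\setminus L(E')\} : E,E' \text{ programs of size}\le c,\ L(E)\setminus L(E')\neq\emptyset\}$. *)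

theory Defs
  imports "HOL-Computational_Algebra.Polynomial"
begin

datatype cmp = Ge | Gt | Eq | Lt | Le

text \<open>Ref n is a reference to the earlier
  line number n (lines numbered from 0). A comparison
  Cmp ts op k stands for  (sum over (alpha,t) in ts of alpha * t)  op  k,
  the summands being given as the finite list ts (LCons alpha t rest).\<close>
datatype 'a form =
    Sym 'a
  | Neg "'a form"
  | And "'a form" "'a form"
  | Cmp "'a lin" cmp nat
  | Ref nat
and 'a trm =
    Count "'a form"
  | Const nat
and 'a lin =
    LNil
  | LCons nat "'a trm" "'a lin"

type_synonym 'a program = "'a form list"

fun cmp_sem :: "cmp \<Rightarrow> nat \<Rightarrow> nat \<Rightarrow> bool" where
  "cmp_sem Ge x y = (x \<ge> y)"
| "cmp_sem Gt x y = (x > y)"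
| "cmp_sem Eq x y = (x = y)"
| "cmp_sem Lt x y = (x < y)"
| "cmp_sem Le x y = (x \<le> y)"

fun binlen :: "nat \<Rightarrow> nat" where
  "binlen n = (if n \<le> 1 then 1 else Suc (binlen (n div 2)))"

primrec fsize :: "'a form \<Rightarrow> nat" and tsize :: "'a trm \<Rightarrow> nat"
  and lsize :: "'a lin \<Rightarrow> nat" where
  "fsize (Sym a) = 1"
| "fsize (Neg f) = Suc (fsize f)"
| "fsize (And f g) = Suc (fsize f + fsize g)"
| "fsize (Cmp ts op k) = Suc (binlen k + lsize ts)"
| "fsize (Ref n) = 1"
| "tsize (Count f) = Suc (fsize f)"
| "tsize (Const c) = binlen c"
| "lsize LNil = 0"
| "lsize (LCons a t ts) = binlen a + tsize t + 1 + lsize ts"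

definition prog_size :: "'a program \<Rightarrow> nat" where
  "prog_size P = sum_list (map fsize P)"

primrec refs_ok :: "nat \<Rightarrow> 'a form \<Rightarrow> bool" and refs_ok_t :: "nat \<Rightarrow> 'a trm \<Rightarrow> bool"
  and refs_ok_l :: "nat \<Rightarrow> 'a lin \<Rightarrow> bool" where
  "refs_ok j (Sym a) = True"
| "refs_ok j (Neg f) = refs_ok j f"
| "refs_ok j (And f g) = (refs_ok j f \<and> refs_ok j g)"
| "refs_ok j (Cmp ts op k) = refs_ok_l j ts"
| "refs_ok j (Ref n) = (n < j)"
| "refs_ok_t j (Count f) = refs_ok j f"
| "refs_ok_t j (Const c) = True"
| "refs_ok_l j LNil = True"
| "refs_ok_l j (LCons a t ts) = (refs_ok_t j t \<and> refs_ok_l j ts)"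

definition wf_prog :: "'a program \<Rightarrow> bool" where
  "wf_prog P \<longleftrightarrow> P \<noteq> [] \<and> (\<forall>j < length P. refs_ok j (P ! j))"

text \<open>holds env w i f: w,i |= f (positions 1-based), where
  env n i is the truth value of line n at position i.\<close>
primrec holds :: "(nat \<Rightarrow> nat \<Rightarrow> bool) \<Rightarrow> 'a list \<Rightarrow> nat \<Rightarrow> 'a form \<Rightarrow> bool"
and tval :: "(nat \<Rightarrow> nat \<Rightarrow> bool) \<Rightarrow> 'a list \<Rightarrow> nat \<Rightarrow> 'a trm \<Rightarrow> nat"
and lval :: "(nat \<Rightarrow> nat \<Rightarrow> bool) \<Rightarrow> 'a list \<Rightarrow> nat \<Rightarrow> 'a lin \<Rightarrow> nat" where
  "holds env w i (Sym a) = (1 \<le> i \<and> i \<le> length w \<and> w ! (i - 1) = a)"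
| "holds env w i (Neg f) = (\<not> holds env w i f)"
| "holds env w i (And f g) = (holds env w i f \<and> holds env w i g)"
| "holds env w i (Cmp ts op k) =
     cmp_sem op (lval env w i ts) k"
| "holds env w i (Ref n) = env n i"
| "tval env w i (Count f) = card {j \<in> {1..i}. holds env w j f}"
| "tval env w i (Const c) = c"
| "lval env w i LNil = 0"
| "lval env w i (LCons a t ts) = a * tval env w i t + lval env w i ts"

primrec line_env :: "'a program \<Rightarrow> 'a list \<Rightarrow> nat \<Rightarrow> nat \<Rightarrow> nat \<Rightarrow> bool" where
  "line_env P w 0 = (\<lambda>n i. False)"
| "line_env P w (Suc j) = (\<lambda>n i. if n < j then line_env P w j n i
                                 else if n = j then holds (line_env P w j) w i (P ! j)
                                 else False)"

definition accepts :: "'a program \<Rightarrow> 'a list \<Rightarrow> bool" where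
  "accepts P w = holds (line_env P w (length P - 1)) w (length w) (last P)"

definition lang :: "'a program \<Rightarrow> 'a list set" where
  "lang P = {w. accepts P w}"

definition length_complexity :: "'a itself \<Rightarrow> nat \<Rightarrow> nat" where
  "length_complexity (_ :: 'a itself) c =
     Sup {LEAST n. \<exists>w \<in> lang E - lang E'. length w = n | E E' :: 'a program.
            wf_prog E \<and> wf_prog E' \<and> prog_size E \<le> c \<and> prog_size E' \<le> c
            \<and> lang E - lang E' \<noteq> {}}"

end

theory Submission
  imports Defs
begin

text \<open>A comparison with threshold k only sees its left-hand side capped at k + 1. Summing these
  capped values over all comparisons of all lines gives a potential that is nondecreasing along
  the word and bounded by c 2^c for a program of size c. If the potentials of E and E' do not
  grow from position p to p + 1, then every comparison either did not change its left-hand side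
  there or had already passed its threshold; so deleting the letter at p + 1, which lowers every
  later count by the increment it caused, changes no truth value and the word stays in
  L(E) - L(E'). Hence a shortest word of L(E) - L(E') has length at most 2c 2^c + 1.
  Conversely, the one-line program #[true] \<ge> 2^(c-7) has size c and accepts exactly the words
  of length at least 2^(c-7).\<close>

declare binlen.simps [simp del]

lemma binlen_le_1 [simp]: "n \<le> 1 \<Longrightarrow> binlen n = 1"
  by (simp add: binlen.simps)

lemma Suc_le_two_power_binlen: "Suc n \<le> 2 ^ binlen n"
proof (induction n rule: binlen.induct)
  case (1 n)
  show ?case
  proof (cases "n \<le> 1")
    case False
    then have "binlen n = Suc (binlen (n div 2))" by (simp add: binlen.simps)
    with 1 False show ?thesis by auto
  qed auto
qed

lemma binlen_double: "0 < n \<Longrightarrow> binlen (2 * n) = Suc (binlen n)"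
  by (subst binlen.simps) simp

lemma binlen_two_power: "binlen (2 ^ m) = Suc m"
  by (induction m) (simp_all add: binlen_double)

lemma tval_mono: "i \<le> i' \<Longrightarrow> tval env w i t \<le> tval env w i' t"
  by (cases t) (auto intro!: card_mono)

lemma lval_mono: "i \<le> i' \<Longrightarrow> lval env w i ts \<le> lval env w i' ts"
  by (induction ts rule: lin.induct[where ?P1.0 = "\<lambda>_. True" and ?P2.0 = "\<lambda>_. True"])
    (auto intro!: add_mono mult_left_mono tval_mono)

text \<open>Sum over the comparisons of a formula of their left-hand sides capped at threshold + 1.
  References contribute nothing: each line has its own summand in prog_cap below.\<close>

fun fcap :: "(nat \<Rightarrow> nat \<Rightarrow> bool) \<Rightarrow> 'a list \<Rightarrow> nat \<Rightarrow> 'a form \<Rightarrow> nat"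
  and tcap :: "(nat \<Rightarrow> nat \<Rightarrow> bool) \<Rightarrow> 'a list \<Rightarrow> nat \<Rightarrow> 'a trm \<Rightarrow> nat"
  and lcap :: "(nat \<Rightarrow> nat \<Rightarrow> bool) \<Rightarrow> 'a list \<Rightarrow> nat \<Rightarrow> 'a lin \<Rightarrow> nat" where
  "fcap env w i (Sym a) = 0"
| "fcap env w i (Neg f) = fcap env w i f"
| "fcap env w i (And f g) = fcap env w i f + fcap env w i g"
| "fcap env w i (Cmp ts op k) = min (lval env w i ts) (Suc k) + lcap env w i ts"
| "fcap env w i (Ref n) = 0"
| "tcap env w i (Count f) = fcap env w i f"
| "tcap env w i (Const c) = 0"
| "lcap env w i LNil = 0"
| "lcap env w i (LCons a t ts) = tcap env w i t + lcap env w i ts"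

lemma cap_mono:
  "i \<le> i' \<Longrightarrow> fcap env w i f \<le> fcap env w i' f"
  "i \<le> i' \<Longrightarrow> tcap env w i t \<le> tcap env w i' t"
  "i \<le> i' \<Longrightarrow> lcap env w i ts \<le> lcap env w i' ts"
  by (induction f and t and ts) (auto intro!: add_mono min.mono lval_mono)

lemma add_le_two_power_Suc_add:
  assumes "a \<le> 2 ^ m" and "b \<le> 2 ^ n"
  shows "a + b \<le> (2::nat) ^ Suc (m + n)"
proof -
  have "(2::nat) ^ m \<le> 2 ^ (m + n)" and "(2::nat) ^ n \<le> 2 ^ (m + n)"
    by (simp_all add: power_increasing)
  with assms show ?thesis unfolding power_Suc by linarith
qed

lemma cap_bound:
  "fcap env w i f \<le> 2 ^ fsize f"
  "tcap env w i t \<le> 2 ^ tsize t"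
  "lcap env w i ts \<le> 2 ^ lsize ts"
proof (induction f and t and ts)
  case (And f g)
  from add_le_two_power_Suc_add[OF And] show ?case by simp
next
  case (Cmp ts op k)
  have "min (lval env w i ts) (Suc k) \<le> 2 ^ binlen k"
    using Suc_le_two_power_binlen[of k] by linarith
  from add_le_two_power_Suc_add[OF this Cmp] show ?case by simp
next
  case (Count f)
  then show ?case by (simp add: le_trans[OF _ power_increasing])
next
  case (LCons a t ts)
  then have "tcap env w i t + lcap env w i ts \<le> 2 ^ Suc (tsize t + lsize ts)"
    by (rule add_le_two_power_Suc_add)
  also have "\<dots> \<le> 2 ^ (binlen a + tsize t + 1 + lsize ts)"
    by (rule power_increasing) auto
  finally show ?case by simp
qed auto

text \<open>remove_at w p deletes the letter at the 1-based position Suc p; del_pos p sends every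
  other position of w to its position in remove_at w p.\<close>

definition remove_at :: "'a list \<Rightarrow> nat \<Rightarrow> 'a list" where
  "remove_at w p = take p w @ drop (Suc p) w"

definition del_pos :: "nat \<Rightarrow> nat \<Rightarrow> nat" where
  "del_pos p i = (if i \<le> p then i else i - 1)"

text \<open>v' is v with its increment from p to Suc p cut out, stated without subtraction.\<close>

definition step_removed :: "nat \<Rightarrow> (nat \<Rightarrow> nat) \<Rightarrow> (nat \<Rightarrow> nat) \<Rightarrow> bool" where
  "step_removed p v v' \<longleftrightarrow>
     (\<forall>i\<le>p. v' i = v i) \<and> (\<forall>i\<ge>Suc (Suc p). v' (i - 1) + v (Suc p) = v i + v p)"

lemma step_removed_count:
  assumes "\<And>i. i \<noteq> Suc p \<Longrightarrow> P' (del_pos p i) = P i"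
  shows "step_removed p (\<lambda>i. card {j \<in> {1..i}. P j}) (\<lambda>i. card {j \<in> {1..i}. P' j})"
proof -
  have before: "P' j = P j" if "j \<le> p" for j
    using assms[of j] that by (simp add: del_pos_def)
  have after: "P' (j - 1) = P j" if "Suc p < j" for j
    using assms[of j] that by (simp add: del_pos_def)
  have "card {j \<in> {1..i - 1}. P' j} + card {j \<in> {1..Suc p}. P j}
    = card {j \<in> {1..i}. P j} + card {j \<in> {1..p}. P j}" if i: "Suc (Suc p) \<le> i" for i
  proof -
    let ?A = "{j \<in> {1..i}. j \<noteq> Suc p \<and> P j}"
    have inj: "inj_on (del_pos p) ?A"
      by (auto simp: inj_on_def del_pos_def split: if_splits)
    have img: "del_pos p ` ?A = {j \<in> {1..i - 1}. P' j}"
    proof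
      show "del_pos p ` ?A \<subseteq> {j \<in> {1..i - 1}. P' j}"
        using i before after by (auto simp: del_pos_def)
      show "{j \<in> {1..i - 1}. P' j} \<subseteq> del_pos p ` ?A"
      proof
        fix j assume j: "j \<in> {j \<in> {1..i - 1}. P' j}"
        show "j \<in> del_pos p ` ?A"
        proof (cases "j \<le> p")
          case True
          with j before[of j] show ?thesis by (force simp: del_pos_def)
        next
          case False
          with j after[of "Suc j"] show ?thesis
            by (auto simp: del_pos_def image_iff intro!: bexI[of _ "Suc j"])
        qed
      qed
    qed
    have "card {j \<in> {1..i - 1}. P' j} = card ?A"
      using card_image[OF inj] img by simp
    moreover have "{j \<in> {1..i}. P j} = (if P (Suc p) then insert (Suc p) ?A else ?A)"
      using i by auto
    moreover have "{j \<in> {1..Suc p}. P j}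
      = (if P (Suc p) then insert (Suc p) {j \<in> {1..p}. P j} else {j \<in> {1..p}. P j})"
      by (auto simp: le_Suc_eq)
    ultimately show ?thesis by simp
  qed
  moreover have "{j \<in> {1..i}. P' j} = {j \<in> {1..i}. P j}" if "i \<le> p" for i
    using before that by auto
  ultimately show ?thesis
    unfolding step_removed_def by simp
qed

lemma step_removed_lin:
  assumes "step_removed p u u'" and "step_removed p v v'"
  shows "step_removed p (\<lambda>i. a * u i + v i) (\<lambda>i. a * u' i + v' i)"
  unfolding step_removed_def
proof (intro conjI allI impI)
  fix i assume "i \<le> p"
  with assms show "a * u' i + v' i = a * u i + v i" by (simp add: step_removed_def)
next
  fix i assume "Suc (Suc p) \<le> i"
  with assms have "u' (i - 1) + u (Suc p) = u i + u p" and "v' (i - 1) + v (Suc p) = v i + v p"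
    by (simp_all add: step_removed_def)
  moreover from this(1) have "a * u' (i - 1) + a * u (Suc p) = a * u i + a * u p"
    by (metis distrib_left)
  ultimately show "a * u' (i - 1) + v' (i - 1) + (a * u (Suc p) + v (Suc p))
    = a * u i + v i + (a * u p + v p)"
    by linarith
qed

lemma cmp_sem_min_Suc: "cmp_sem op (min x (Suc k)) k = cmp_sem op x k"
  by (cases op) auto

lemma cmp_sem_step_removed:
  assumes removed: "step_removed p v v'" and "mono v"
    and stagnant: "min (v p) (Suc k) = min (v (Suc p)) (Suc k)" and "i \<noteq> Suc p"
  shows "cmp_sem op (v' (del_pos p i)) k = cmp_sem op (v i) k"
proof -
  have "min (v' (del_pos p i)) (Suc k) = min (v i) (Suc k)"
  proof (cases "i \<le> p")
    case True
    with removed show ?thesis by (simp add: step_removed_def del_pos_def)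
  next
    case False
    with \<open>i \<noteq> Suc p\<close> have i: "Suc (Suc p) \<le> i" by simp
    with removed have shift: "v' (i - 1) + v (Suc p) = v i + v p" by (simp add: step_removed_def)
    have incr: "v p \<le> v (Suc p)" "v (Suc p) \<le> v i"
      using \<open>mono v\<close> i by (simp_all add: monoD)
    have "min (v' (i - 1)) (Suc k) = min (v i) (Suc k)"
    proof (cases "v p \<le> k")
      case True
      with stagnant have "v (Suc p) = v p" by (simp add: min_def split: if_splits)
      with shift show ?thesis by simp
    next
      case False
      with shift incr have "Suc k \<le> v' (i - 1)" and "Suc k \<le> v i" by linarith+
      then show ?thesis by simp
    qed
    with False show ?thesis by (simp add: del_pos_def)
  qed
  then show ?thesis by (metis cmp_sem_min_Suc)
qed

lemma holds_remove_at:
  assumes env: "\<And>n i. n < J \<Longrightarrow> i \<noteq> Suc p \<Longrightarrow> env' n (del_pos p i) = env n i"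
    and p: "p < length w"
  shows "refs_ok J f \<Longrightarrow> fcap env w p f = fcap env w (Suc p) f \<Longrightarrow>
      \<forall>i. i \<noteq> Suc p \<longrightarrow> holds env' (remove_at w p) (del_pos p i) f = holds env w i f"
    and "refs_ok_t J t \<Longrightarrow> tcap env w p t = tcap env w (Suc p) t \<Longrightarrow>
      step_removed p (\<lambda>i. tval env w i t) (\<lambda>i. tval env' (remove_at w p) i t)"
    and "refs_ok_l J ts \<Longrightarrow> lcap env w p ts = lcap env w (Suc p) ts \<Longrightarrow>
      step_removed p (\<lambda>i. lval env w i ts) (\<lambda>i. lval env' (remove_at w p) i ts)"
proof (induction f and t and ts)
  case (Sym a)
  show ?case
    using p by (auto simp: del_pos_def remove_at_def nth_append min_def Suc_diff_Suc numeral_2_eq_2)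
next
  case (And f g)
  have "fcap env w p f = fcap env w (Suc p) f" and "fcap env w p g = fcap env w (Suc p) g"
    using And.prems(2) cap_mono(1)[of p "Suc p" env w f] cap_mono(1)[of p "Suc p" env w g]
    by simp_all
  with And show ?case by simp
next
  case (Cmp ts op k)
  have "min (lval env w p ts) (Suc k) \<le> min (lval env w (Suc p) ts) (Suc k)"
    by (intro min.mono lval_mono) simp_all
  with Cmp.prems(2) cap_mono(3)[of p "Suc p" env w ts]
  have stagnant: "min (lval env w p ts) (Suc k) = min (lval env w (Suc p) ts) (Suc k)"
    and "lcap env w p ts = lcap env w (Suc p) ts"
    by simp_all
  with Cmp have removed: "step_removed p (\<lambda>i. lval env w i ts) (\<lambda>i. lval env' (remove_at w p) i ts)"
    by simp
  have "mono (\<lambda>i. lval env w i ts)"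
    by (simp add: lval_mono monoI)
  from cmp_sem_step_removed[OF removed this] stagnant show ?case
    by simp
next
  case (Ref n)
  then show ?case using env by simp
next
  case (Count f)
  then have "\<forall>i. i \<noteq> Suc p \<longrightarrow> holds env' (remove_at w p) (del_pos p i) f = holds env w i f"
    by simp
  then show ?case
    using step_removed_count[of p "\<lambda>j. holds env' (remove_at w p) j f" "\<lambda>j. holds env w j f"]
    by simp
next
  case (LCons a t ts)
  have "tcap env w p t = tcap env w (Suc p) t" and "lcap env w p ts = lcap env w (Suc p) ts"
    using LCons.prems(2) cap_mono(2)[of p "Suc p" env w t] cap_mono(3)[of p "Suc p" env w ts]
    by simp_all
  with LCons show ?case by (simp add: step_removed_lin)
qed (simp_all add: step_removed_def)

definition prog_cap :: "'a program \<Rightarrow> 'a list \<Rightarrow> nat \<Rightarrow> nat" where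
  "prog_cap P w i = (\<Sum>m<length P. fcap (line_env P w m) w i (P ! m))"

lemma prog_cap_mono: "i \<le> i' \<Longrightarrow> prog_cap P w i \<le> prog_cap P w i'"
  unfolding prog_cap_def by (intro sum_mono cap_mono)

lemma fcap_eq_if_prog_cap_eq:
  assumes "prog_cap P w p = prog_cap P w (Suc p)" and "m < length P"
  shows "fcap (line_env P w m) w p (P ! m) = fcap (line_env P w m) w (Suc p) (P ! m)"
proof -
  let ?f = "\<lambda>i m. fcap (line_env P w m) w i (P ! m)"
  have "sum (?f p) {..<length P} = sum (?f (Suc p)) {..<length P}"
    using assms(1) by (simp add: prog_cap_def)
  moreover have "?f p m \<le> ?f (Suc p) m" for m
    by (simp add: cap_mono(1))
  ultimately show ?thesis
    using sum_mono_inv[of "?f p" "{..<length P}" "?f (Suc p)" m] assms(2) by simp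
qed

lemma length_le_prog_size: "length P \<le> prog_size P"
proof (induction P)
  case (Cons f P)
  have "1 \<le> fsize f"
    by (cases f) simp_all
  with Cons show ?case by (simp add: prog_size_def)
qed (simp add: prog_size_def)

lemma prog_cap_bound: "prog_cap P w i \<le> prog_size P * 2 ^ prog_size P"
proof -
  have "fcap (line_env P w m) w i (P ! m) \<le> 2 ^ prog_size P" if "m < length P" for m
  proof -
    have "fcap (line_env P w m) w i (P ! m) \<le> 2 ^ fsize (P ! m)"
      by (rule cap_bound)
    also have "\<dots> \<le> 2 ^ prog_size P"
      using that elem_le_sum_list[of m "map fsize P"] by (simp add: prog_size_def power_increasing)
    finally show ?thesis .
  qed
  then have "prog_cap P w i \<le> (\<Sum>m<length P. 2 ^ prog_size P)"
    unfolding prog_cap_def by (intro sum_mono) simp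
  also have "\<dots> \<le> prog_size P * 2 ^ prog_size P"
    by (simp add: length_le_prog_size)
  finally show ?thesis .
qed

lemma line_env_remove_at:
  assumes refs: "\<forall>j<length P. refs_ok j (P ! j)" and p: "p < length w"
    and stagnant: "prog_cap P w p = prog_cap P w (Suc p)"
  shows "J \<le> length P \<Longrightarrow> n < J \<Longrightarrow> i \<noteq> Suc p \<Longrightarrow>
    line_env P (remove_at w p) J n (del_pos p i) = line_env P w J n i"
proof (induction J arbitrary: n i)
  case (Suc J)
  then have "J < length P" by simp
  from Suc have env: "\<And>n i. n < J \<Longrightarrow> i \<noteq> Suc p \<Longrightarrow>
      line_env P (remove_at w p) J n (del_pos p i) = line_env P w J n i"
    by simp
  have "\<forall>i. i \<noteq> Suc p \<longrightarrow> holds (line_env P (remove_at w p) J) (remove_at w p) (del_pos p i) (P ! J)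
      = holds (line_env P w J) w i (P ! J)"
    by (rule holds_remove_at(1)[where env' = "line_env P (remove_at w p) J", OF env p])
      (use \<open>J < length P\<close> refs fcap_eq_if_prog_cap_eq[OF stagnant] in auto)
  with Suc.prems env show ?case by simp
qed simp

lemma accepts_remove_at:
  assumes "wf_prog P" and p: "Suc p < length w" and stagnant: "prog_cap P w p = prog_cap P w (Suc p)"
  shows "accepts P (remove_at w p) \<longleftrightarrow> accepts P w"
proof -
  define J where "J = length P - 1"
  have J: "J < length P" and last: "last P = P ! J"
    using \<open>wf_prog P\<close> by (simp_all add: wf_prog_def J_def last_conv_nth)
  have refs: "\<forall>j<length P. refs_ok j (P ! j)"
    using \<open>wf_prog P\<close> by (simp add: wf_prog_def)
  have env: "\<And>n i. n < J \<Longrightarrow> i \<noteq> Suc p \<Longrightarrow>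
      line_env P (remove_at w p) J n (del_pos p i) = line_env P w J n i"
    using line_env_remove_at[OF refs _ stagnant] J p by simp
  have "\<forall>i. i \<noteq> Suc p \<longrightarrow> holds (line_env P (remove_at w p) J) (remove_at w p) (del_pos p i) (P ! J)
      = holds (line_env P w J) w i (P ! J)"
    by (rule holds_remove_at(1)[where env' = "line_env P (remove_at w p) J", OF env])
      (use J p refs fcap_eq_if_prog_cap_eq[OF stagnant] in auto)
  moreover have "length (remove_at w p) = del_pos p (length w)"
    using p by (simp add: remove_at_def del_pos_def)
  ultimately show ?thesis
    using p unfolding accepts_def J_def[symmetric] last by simp
qed

lemma mono_plateau:
  fixes T :: "nat \<Rightarrow> nat"
  assumes "mono T" and "T n < n"
  shows "\<exists>p<n. T p = T (Suc p)"
  using assms(2)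
proof (induction n)
  case (Suc n)
  show ?case
  proof (cases "T n = T (Suc n)")
    case False
    with \<open>mono T\<close> have "T n < T (Suc n)"
      by (simp add: monoD order_less_le)
    with Suc.prems have "T n < n" by simp
    with Suc.IH show ?thesis by (auto intro: less_SucI)
  qed blast
qed simp

lemma short_word_same_acceptance:
  assumes "wf_prog E" and "wf_prog E'"
  shows "\<exists>v. length v \<le> Suc (prog_size E * 2 ^ prog_size E + prog_size E' * 2 ^ prog_size E')
    \<and> (accepts E v \<longleftrightarrow> accepts E w) \<and> (accepts E' v \<longleftrightarrow> accepts E' w)"
    (is "\<exists>v. length v \<le> Suc ?M \<and> _")
proof (induction "length w" arbitrary: w rule: less_induct)
  case less
  show ?case
  proof (cases "length w \<le> Suc ?M")
    case False
    define T where "T i = prog_cap E w i + prog_cap E' w i" for i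
    have "mono T"
      unfolding T_def by (intro monoI add_mono prog_cap_mono)
    moreover have "T (length w - 1) \<le> ?M"
      unfolding T_def by (intro add_mono prog_cap_bound)
    with False have "T (length w - 1) < length w - 1"
      by linarith
    ultimately obtain p where p: "p < length w - 1" and "T p = T (Suc p)"
      using mono_plateau by blast
    then have "prog_cap E w p = prog_cap E w (Suc p)" and "prog_cap E' w p = prog_cap E' w (Suc p)"
      using prog_cap_mono[of p "Suc p" E w] prog_cap_mono[of p "Suc p" E' w] unfolding T_def
      by simp_all
    with assms p have "accepts E (remove_at w p) = accepts E w"
      and "accepts E' (remove_at w p) = accepts E' w"
      by (simp_all add: accepts_remove_at)
    moreover have "length (remove_at w p) < length w"
      using p by (simp add: remove_at_def)
    ultimately show ?thesis
      using less(1)[of "remove_at w p"] by auto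
  qed blast
qed

definition shortest_witness :: "'a program \<Rightarrow> 'a program \<Rightarrow> nat" where
  "shortest_witness E E' = (LEAST n. \<exists>w \<in> lang E - lang E'. length w = n)"

lemma length_complexity_eq_Sup:
  "length_complexity TYPE('a) c = Sup {shortest_witness E E' | E E' :: 'a program.
     wf_prog E \<and> wf_prog E' \<and> prog_size E \<le> c \<and> prog_size E' \<le> c \<and> lang E - lang E' \<noteq> {}}"
  by (simp add: length_complexity_def shortest_witness_def)

lemma shortest_witness_attained:
  assumes "lang E - lang E' \<noteq> {}"
  shows "\<exists>w \<in> lang E - lang E'. length w = shortest_witness E E'"
proof -
  from assms obtain w where "w \<in> lang E - lang E'"
    by blast
  then have "\<exists>v \<in> lang E - lang E'. length v = length w"
    by blast
  then show ?thesis
    unfolding shortest_witness_def by (rule LeastI)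
qed

lemma shortest_witness_le_length:
  assumes "w \<in> lang E - lang E'"
  shows "shortest_witness E E' \<le> length w"
proof -
  from assms have "\<exists>v \<in> lang E - lang E'. length v = length w"
    by blast
  then show ?thesis
    unfolding shortest_witness_def by (rule Least_le)
qed

lemma shortest_witness_le:
  assumes "wf_prog E" "wf_prog E'" "prog_size E \<le> c" "prog_size E' \<le> c" "lang E - lang E' \<noteq> {}"
  shows "shortest_witness E E' \<le> Suc (2 * (c * 2 ^ c))"
proof -
  obtain w where "w \<in> lang E - lang E'"
    using assms(5) by blast
  then obtain v where v: "v \<in> lang E - lang E'"
    and len: "length v \<le> Suc (prog_size E * 2 ^ prog_size E + prog_size E' * 2 ^ prog_size E')"
    using short_word_same_acceptance[OF assms(1,2), of w] by (auto simp: lang_def)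
  have bound: "n * 2 ^ n \<le> c * 2 ^ c" if "n \<le> c" for n :: nat
    using that by (intro mult_mono power_increasing) simp_all
  from len bound[OF assms(3)] bound[OF assms(4)] have "length v \<le> Suc (2 * (c * 2 ^ c))"
    by linarith
  with shortest_witness_le_length[OF v] show ?thesis
    by simp
qed

lemma length_complexity_le: "length_complexity TYPE('a) c \<le> Suc (2 * (c * 2 ^ c))"
proof -
  let ?S = "{shortest_witness E E' | E E' :: 'a program.
     wf_prog E \<and> wf_prog E' \<and> prog_size E \<le> c \<and> prog_size E' \<le> c \<and> lang E - lang E' \<noteq> {}}"
  have "Sup ?S \<le> Suc (2 * (c * 2 ^ c))"
  proof (cases "?S = {}")
    case False
    then show ?thesis
      by (rule cSup_least) (auto intro: shortest_witness_le)
  qed (simp only: Sup_nat_empty le0)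
  then show ?thesis
    unfolding length_complexity_eq_Sup .
qed

lemma shortest_witness_le_length_complexity:
  fixes E E' :: "'a program"
  assumes "wf_prog E" "wf_prog E'" "prog_size E \<le> c" "prog_size E' \<le> c" "lang E - lang E' \<noteq> {}"
  shows "shortest_witness E E' \<le> length_complexity TYPE('a) c"
  unfolding length_complexity_eq_Sup
proof (rule cSup_upper)
  show "bdd_above {shortest_witness E E' | E E' :: 'a program.
     wf_prog E \<and> wf_prog E' \<and> prog_size E \<le> c \<and> prog_size E' \<le> c \<and> lang E - lang E' \<noteq> {}}"
    by (rule bdd_aboveI[where M = "Suc (2 * (c * 2 ^ c))"]) (auto intro: shortest_witness_le)
qed (use assms in blast)

text \<open>The program #[0 = 0] \<ge> K: the number of positions read so far is at least K.\<close>

definition at_least_prog :: "nat \<Rightarrow> 'a program" where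
  "at_least_prog K = [Cmp (LCons 1 (Count (Cmp LNil Eq 0)) LNil) Ge K]"

definition reject_prog :: "'a program" where
  "reject_prog = [Cmp LNil Lt 0]"

lemma accepts_at_least_prog: "accepts (at_least_prog K) w \<longleftrightarrow> K \<le> length w"
proof -
  have "{j. Suc 0 \<le> j \<and> j \<le> n} = {1..n}" for n
    by auto
  then show ?thesis
    by (simp add: accepts_def at_least_prog_def)
qed

lemma not_accepts_reject_prog: "\<not> accepts reject_prog w"
  by (simp add: accepts_def reject_prog_def)

lemma prog_size_at_least_prog: "prog_size (at_least_prog K) = binlen K + 6"
  by (simp add: prog_size_def at_least_prog_def)

lemma two_power_le_length_complexity:
  assumes "7 \<le> c"
  shows "2 ^ (c - 7) \<le> length_complexity TYPE('a) c"
proof -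
  define K :: nat where "K = 2 ^ (c - 7)"
  define E :: "'a program" where "E = at_least_prog K"
  have wf: "wf_prog E" "wf_prog reject_prog"
    by (simp_all add: wf_prog_def E_def at_least_prog_def reject_prog_def)
  have "prog_size E \<le> c"
    using assms by (simp add: E_def prog_size_at_least_prog K_def binlen_two_power)
  moreover have "prog_size reject_prog \<le> c"
    using assms by (simp add: reject_prog_def prog_size_def)
  ultimately have size: "prog_size E \<le> c" "prog_size reject_prog \<le> c" .
  have lang: "lang E - lang reject_prog = {w. K \<le> length w}"
    by (simp add: E_def lang_def accepts_at_least_prog not_accepts_reject_prog)
  then have nonempty: "lang E - lang reject_prog \<noteq> {}"
    by (auto intro: exI[of _ "replicate K undefined"])
  then obtain v where "v \<in> lang E - lang reject_prog" and "length v = shortest_witness E reject_prog"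
    using shortest_witness_attained by blast
  with lang have "K \<le> shortest_witness E reject_prog"
    by simp
  also have "\<dots> \<le> length_complexity TYPE('a) c"
    by (rule shortest_witness_le_length_complexity[OF wf size nonempty])
  finally show ?thesis
    by (simp add: K_def)
qed

lemma Suc_mult_two_power_le: "Suc (2 * (c * 2 ^ c)) \<le> (2::nat) ^ (2 + 2 * c)"
proof -
  have "c * 2 ^ c \<le> 2 ^ c * 2 ^ c"
    using less_exp[of c] by simp
  then have "c * 2 ^ c \<le> 2 ^ (2 * c)"
    by (simp add: mult_2 power_add)
  moreover have "(1::nat) \<le> 2 ^ (2 * c)"
    by simp
  ultimately have "Suc (2 * (c * 2 ^ c)) \<le> 4 * 2 ^ (2 * c)"
    by linarith
  then show ?thesis
    by (simp add: power_add)
qed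

theorem theorem4p7:
  shows "(\<exists>q :: nat poly. \<forall>c. length_complexity TYPE('a::finite) c \<le> 2 ^ poly q c)
       \<and> (\<exists>a::nat. a > 0 \<and> (\<exists>N. \<forall>c \<ge> N. 2 ^ (c div a) \<le> length_complexity TYPE('a) c))"
proof
  have "length_complexity TYPE('a) c \<le> 2 ^ poly [:2, 2:] c" for c
  proof -
    have "length_complexity TYPE('a) c \<le> 2 ^ (2 + 2 * c)"
      using length_complexity_le[where 'a = 'a] Suc_mult_two_power_le by (rule le_trans)
    moreover have "poly [:2, 2:] c = 2 + 2 * c"
      by simp
    ultimately show ?thesis
      by (simp only:)
  qed
  then show "\<exists>q :: nat poly. \<forall>c. length_complexity TYPE('a) c \<le> 2 ^ poly q c"
    by blast
  have "2 ^ (c div 2) \<le> length_complexity TYPE('a) c" if "14 \<le> c" for c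
  proof -
    have "(2::nat) ^ (c div 2) \<le> 2 ^ (c - 7)"
      using that by (intro power_increasing) auto
    also have "\<dots> \<le> length_complexity TYPE('a) c"
      using that by (intro two_power_le_length_complexity) simp
    finally show ?thesis .
  qed
  then show "\<exists>a::nat. a > 0 \<and> (\<exists>N. \<forall>c \<ge> N. 2 ^ (c div a) \<le> length_complexity TYPE('a) c)"
    by (intro exI[of _ 2]) auto
qed

end
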